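(* Let $Q=(G\leftleftarrows A)$ be a multiplicative graph with semigroup of vertices $G$. Let $\mathbf k[A]$ be the vector space with basis $A$ and $\mathbf k[G]$ the semigroup algebra, and let $\phi:\mathbf k[A]\to\mathbf k[G]$, $\phi(a)=t(a)-s(a)$. Equip $\mathbf k[A]$ with the $\mathbf k[G]$-bimodule structure extending linearly the two-sided action of $G$ on $A$ given by $\mu$, equip $\mathbf k[G]$ with $\Delta_0(g)=g\otimes g$, and define $\Delta_1:\mathbf k[A]\to\mathbf k[A]\otimes\mathbf k[G]+\mathbf k[G]\otimes\mathbf k[A]$ by $\Delta_1(a)=a\otimes t(a)+s(a)\otimes a$. Then $(\mathbf k[A]\xrightarrow{\phi}\mathbf k[G])$ with these structures is a bialgebra in the Loday–Pirashvili category $\mathcal{LM}$.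
   Context: A multiplicative graph is a directed graph $(G\overset{s}{\underset{t}{\leftleftarrows}}A)$ with an associative morphism $\mu:Q\,\square\,Q\to Q$ from its Cartesian product square (vertices $G\times G$, arrows $A\times G\sqcup G\times A$); this makes $G$ a semigroup and gives left and right actions $g\cdot a=\mu(g,a)$, $a\cdot g=\mu(a,g)$ of $G$ on $A$ with $s(g\cdot a)=gs(a)$, $t(g\cdot a)=gt(a)$, $s(a\cdot g)=s(a)g$, $t(a\cdot g)=t(a)g$. Over a field $\mathbf k$ of characteristic $0$, the category $\mathcal{LM}$ has objects linear maps $U\xrightarrow{f}V$ and morphisms commutative squares, with tensor product $(U\xrightarrow{f}V)\otimes(U'\xrightarrow{f'}V')=(U\otimes V'+V\otimes U'\xrightarrow{f\otimes\mathrm{Id}+\mathrm{Id}\otimes f'}V\otimes V')$. An algebra in $\mathcal{LM}$ is $(\mathcal A\xrightarrow{f}\mathcal H)$ with $\mathcal H$ an algebra, $\mathcal A$ an $\mathcal H$-bimodule and $f$ a bimodule map. A bialgebra in $\mathcal{LM}$ is such an algebra together with a coproduct $\Delta_0$ making $\mathcal H$ a bialgebra and a two-sided coaction $\Delta_1:\mathcal A\to\mathcal A\otimes\mathcal H+\mathcal H\otimes\mathcal A$ which is an $\mathcal H$-bimodule map (with $\mathcal H$ acting on the target via $\Delta_0$) and satisfies $\Delta_0\circ f=(f\otimes\mathrm{Id}+\mathrm{Id}\otimes f)\circ\Delta_1$. *)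

theory Defs
  imports "HOL-Library.Poly_Mapping"
begin

text \<open>A directed graph with vertex type 'g and arrow type 'a, source s and target t,
together with an associative morphism mu from the Cartesian product square.
On vertices mu is a multiplication m; on arrows A x G it is the right action ra,
on G x A the left action la.  Associativity of mu on the triple product
(vertices G x G x G; arrows A x G x G, G x A x G, G x G x A) gives the four equations.\<close>

definition mult_graph ::
  "('a \<Rightarrow> 'g) \<Rightarrow> ('a \<Rightarrow> 'g) \<Rightarrow> ('g \<Rightarrow> 'g \<Rightarrow> 'g) \<Rightarrow> ('g \<Rightarrow> 'a \<Rightarrow> 'a) \<Rightarrow> ('a \<Rightarrow> 'g \<Rightarrow> 'a) \<Rightarrow> bool"
  where "mult_graph s t m la ra \<longleftrightarrow>
     (\<forall>g h k. m (m g h) k = m g (m h k)) \<and>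
     (\<forall>g a. s (la g a) = m g (s a) \<and> t (la g a) = m g (t a)) \<and>
     (\<forall>a g. s (ra a g) = m (s a) g \<and> t (ra a g) = m (t a) g) \<and>
     (\<forall>g h a. la (m g h) a = la g (la h a)) \<and>
     (\<forall>g a h. ra (la g a) h = la g (ra a h)) \<and>
     (\<forall>a g h. ra (ra a g) h = ra a (m g h))"

text \<open>k[X] is the type of finitely supported functions from 'x to 'k.  The tensor product k[X] \<otimes> k[Y] is identified with
k[X \<times> Y], and the direct sum k[X] \<oplus> k[Y] with k[X + Y].\<close>

definition smult_pm :: "'k::field \<Rightarrow> ('x \<Rightarrow>\<^sub>0 'k) \<Rightarrow> ('x \<Rightarrow>\<^sub>0 'k)"
  where "smult_pm c v = Poly_Mapping.map (\<lambda>x. c * x) v"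

definition bvec :: "'x \<Rightarrow> ('x \<Rightarrow>\<^sub>0 'k::field)"
  where "bvec x = Poly_Mapping.single x 1"

definition lin_ext :: "('x \<Rightarrow> ('y \<Rightarrow>\<^sub>0 'k::field)) \<Rightarrow> ('x \<Rightarrow>\<^sub>0 'k) \<Rightarrow> ('y \<Rightarrow>\<^sub>0 'k)"
  where "lin_ext F v = (\<Sum>x\<in>Poly_Mapping.keys v. smult_pm (Poly_Mapping.lookup v x) (F x))"

definition bil_ext :: "('x \<Rightarrow> 'y \<Rightarrow> ('z \<Rightarrow>\<^sub>0 'k::field)) \<Rightarrow> ('x \<Rightarrow>\<^sub>0 'k) \<Rightarrow> ('y \<Rightarrow>\<^sub>0 'k) \<Rightarrow> ('z \<Rightarrow>\<^sub>0 'k)"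
  where "bil_ext B u v = (\<Sum>x\<in>Poly_Mapping.keys u. \<Sum>y\<in>Poly_Mapping.keys v. smult_pm (Poly_Mapping.lookup u x * Poly_Mapping.lookup v y) (B x y))"

definition linear_pm :: "(('x \<Rightarrow>\<^sub>0 'k::field) \<Rightarrow> ('y \<Rightarrow>\<^sub>0 'k)) \<Rightarrow> bool"
  where "linear_pm f \<longleftrightarrow> (\<forall>u v. f (u + v) = f u + f v) \<and> (\<forall>c v. f (smult_pm c v) = smult_pm c (f v))"

definition bilinear_pm :: "(('x \<Rightarrow>\<^sub>0 'k::field) \<Rightarrow> ('y \<Rightarrow>\<^sub>0 'k) \<Rightarrow> ('z \<Rightarrow>\<^sub>0 'k)) \<Rightarrow> bool"
  where "bilinear_pm B \<longleftrightarrow> (\<forall>u. linear_pm (B u)) \<and> (\<forall>v. linear_pm (\<lambda>u. B u v))"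

definition tens :: "('x \<Rightarrow>\<^sub>0 'k::field) \<Rightarrow> ('y \<Rightarrow>\<^sub>0 'k) \<Rightarrow> ('x \<times> 'y \<Rightarrow>\<^sub>0 'k)"
  where "tens u v = bil_ext (\<lambda>x y. bvec (x, y)) u v"

definition tmap :: "(('x \<Rightarrow>\<^sub>0 'k::field) \<Rightarrow> ('x' \<Rightarrow>\<^sub>0 'k)) \<Rightarrow> (('y \<Rightarrow>\<^sub>0 'k) \<Rightarrow> ('y' \<Rightarrow>\<^sub>0 'k))
     \<Rightarrow> ('x \<times> 'y \<Rightarrow>\<^sub>0 'k) \<Rightarrow> ('x' \<times> 'y' \<Rightarrow>\<^sub>0 'k)"
  where "tmap F G = lin_ext (\<lambda>(x, y). tens (F (bvec x)) (G (bvec y)))"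

definition assoc_pm :: "(('x \<times> 'y) \<times> 'z \<Rightarrow>\<^sub>0 'k::field) \<Rightarrow> ('x \<times> ('y \<times> 'z) \<Rightarrow>\<^sub>0 'k)"
  where "assoc_pm = lin_ext (\<lambda>((x, y), z). bvec (x, (y, z)))"

definition part_AH :: "('x + 'y \<Rightarrow>\<^sub>0 'k::field) \<Rightarrow> ('x \<Rightarrow>\<^sub>0 'k)"
  where "part_AH = lin_ext (\<lambda>z. case z of Inl x \<Rightarrow> bvec x | Inr _ \<Rightarrow> 0)"

definition part_HA :: "('x + 'y \<Rightarrow>\<^sub>0 'k::field) \<Rightarrow> ('y \<Rightarrow>\<^sub>0 'k)"
  where "part_HA = lin_ext (\<lambda>z. case z of Inl _ \<Rightarrow> 0 | Inr y \<Rightarrow> bvec y)"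

definition inl_pm :: "('x \<Rightarrow>\<^sub>0 'k::field) \<Rightarrow> ('x + 'y \<Rightarrow>\<^sub>0 'k)"
  where "inl_pm = lin_ext (\<lambda>x. bvec (Inl x))"

definition inr_pm :: "('y \<Rightarrow>\<^sub>0 'k::field) \<Rightarrow> ('x + 'y \<Rightarrow>\<^sub>0 'k)"
  where "inr_pm = lin_ext (\<lambda>y. bvec (Inr y))"

text \<open>An object (\<A> --f--> \<H>) with \<A> = k['a], \<H> = k['g].
  mul: product of \<H>; la, ra: left and right actions of \<H> on \<A>.
  Algebras are associative, not necessarily unital (the paper starts from a semigroup).\<close>

definition lm_algebra ::
  "(('a \<Rightarrow>\<^sub>0 'k::field) \<Rightarrow> ('g \<Rightarrow>\<^sub>0 'k))
   \<Rightarrow> (('g \<Rightarrow>\<^sub>0 'k) \<Rightarrow> ('g \<Rightarrow>\<^sub>0 'k) \<Rightarrow> ('g \<Rightarrow>\<^sub>0 'k))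
   \<Rightarrow> (('g \<Rightarrow>\<^sub>0 'k) \<Rightarrow> ('a \<Rightarrow>\<^sub>0 'k) \<Rightarrow> ('a \<Rightarrow>\<^sub>0 'k))
   \<Rightarrow> (('a \<Rightarrow>\<^sub>0 'k) \<Rightarrow> ('g \<Rightarrow>\<^sub>0 'k) \<Rightarrow> ('a \<Rightarrow>\<^sub>0 'k)) \<Rightarrow> bool"
  where "lm_algebra f mul la ra \<longleftrightarrow>
     linear_pm f \<and> bilinear_pm mul \<and> bilinear_pm la \<and> bilinear_pm ra \<and>
     (\<forall>x y z. mul (mul x y) z = mul x (mul y z)) \<and>
     (\<forall>x y a. la (mul x y) a = la x (la y a)) \<and>
     (\<forall>x a y. ra (la x a) y = la x (ra a y)) \<and>
     (\<forall>a x y. ra (ra a x) y = ra a (mul x y)) \<and>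
     (\<forall>x a. f (la x a) = mul x (f a)) \<and>
     (\<forall>a x. f (ra a x) = mul (f a) x)"

definition tmul :: "(('g \<Rightarrow>\<^sub>0 'k::field) \<Rightarrow> ('g \<Rightarrow>\<^sub>0 'k) \<Rightarrow> ('g \<Rightarrow>\<^sub>0 'k))
   \<Rightarrow> ('g \<times> 'g \<Rightarrow>\<^sub>0 'k) \<Rightarrow> ('g \<times> 'g \<Rightarrow>\<^sub>0 'k) \<Rightarrow> ('g \<times> 'g \<Rightarrow>\<^sub>0 'k)"
  where "tmul mul = bil_ext (\<lambda>(g1, g2) (h1, h2). tens (mul (bvec g1) (bvec h1)) (mul (bvec g2) (bvec h2)))"

definition tlact ::
  "(('g \<Rightarrow>\<^sub>0 'k::field) \<Rightarrow> ('g \<Rightarrow>\<^sub>0 'k) \<Rightarrow> ('g \<Rightarrow>\<^sub>0 'k))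
   \<Rightarrow> (('g \<Rightarrow>\<^sub>0 'k) \<Rightarrow> ('a \<Rightarrow>\<^sub>0 'k) \<Rightarrow> ('a \<Rightarrow>\<^sub>0 'k))
   \<Rightarrow> ('g \<times> 'g \<Rightarrow>\<^sub>0 'k) \<Rightarrow> (('a \<times> 'g) + ('g \<times> 'a) \<Rightarrow>\<^sub>0 'k) \<Rightarrow> (('a \<times> 'g) + ('g \<times> 'a) \<Rightarrow>\<^sub>0 'k)"
  where "tlact mul la = bil_ext (\<lambda>(g1, g2) z. case z of
       Inl (a, h) \<Rightarrow> inl_pm (tens (la (bvec g1) (bvec a)) (mul (bvec g2) (bvec h)))
     | Inr (h, a) \<Rightarrow> inr_pm (tens (mul (bvec g1) (bvec h)) (la (bvec g2) (bvec a))))"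

definition tract ::
  "(('g \<Rightarrow>\<^sub>0 'k::field) \<Rightarrow> ('g \<Rightarrow>\<^sub>0 'k) \<Rightarrow> ('g \<Rightarrow>\<^sub>0 'k))
   \<Rightarrow> (('a \<Rightarrow>\<^sub>0 'k) \<Rightarrow> ('g \<Rightarrow>\<^sub>0 'k) \<Rightarrow> ('a \<Rightarrow>\<^sub>0 'k))
   \<Rightarrow> (('a \<times> 'g) + ('g \<times> 'a) \<Rightarrow>\<^sub>0 'k) \<Rightarrow> ('g \<times> 'g \<Rightarrow>\<^sub>0 'k) \<Rightarrow> (('a \<times> 'g) + ('g \<times> 'a) \<Rightarrow>\<^sub>0 'k)"
  where "tract mul ra = bil_ext (\<lambda>z (g1, g2). case z of
       Inl (a, h) \<Rightarrow> inl_pm (tens (ra (bvec a) (bvec g1)) (mul (bvec h) (bvec g2)))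
     | Inr (h, a) \<Rightarrow> inr_pm (tens (mul (bvec h) (bvec g1)) (ra (bvec a) (bvec g2))))"

text \<open>Bialgebra in LM: algebra in LM, \<H> a bialgebra with coproduct D0 (coassociative,
  multiplicative), D1 : \<A> \<rightarrow> \<A> \<otimes> \<H> + \<H> \<otimes> \<A> a two-sided coaction (coassociativity in LM,
  written componentwise on \<A>\<otimes>\<H>\<otimes>\<H>, \<H>\<otimes>\<A>\<otimes>\<H>, \<H>\<otimes>\<H>\<otimes>\<A>), an \<H>-bimodule map for the
  actions via D0, and D0 \<circ> f = (f \<otimes> Id + Id \<otimes> f) \<circ> D1.\<close>
definition lm_bialgebra ::
  "(('a \<Rightarrow>\<^sub>0 'k::field) \<Rightarrow> ('g \<Rightarrow>\<^sub>0 'k))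
   \<Rightarrow> (('g \<Rightarrow>\<^sub>0 'k) \<Rightarrow> ('g \<Rightarrow>\<^sub>0 'k) \<Rightarrow> ('g \<Rightarrow>\<^sub>0 'k))
   \<Rightarrow> (('g \<Rightarrow>\<^sub>0 'k) \<Rightarrow> ('a \<Rightarrow>\<^sub>0 'k) \<Rightarrow> ('a \<Rightarrow>\<^sub>0 'k))
   \<Rightarrow> (('a \<Rightarrow>\<^sub>0 'k) \<Rightarrow> ('g \<Rightarrow>\<^sub>0 'k) \<Rightarrow> ('a \<Rightarrow>\<^sub>0 'k))
   \<Rightarrow> (('g \<Rightarrow>\<^sub>0 'k) \<Rightarrow> ('g \<times> 'g \<Rightarrow>\<^sub>0 'k))
   \<Rightarrow> (('a \<Rightarrow>\<^sub>0 'k) \<Rightarrow> (('a \<times> 'g) + ('g \<times> 'a) \<Rightarrow>\<^sub>0 'k)) \<Rightarrow> bool"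
  where "lm_bialgebra f mul la ra D0 D1 \<longleftrightarrow>
     lm_algebra f mul la ra \<and> linear_pm D0 \<and> linear_pm D1 \<and>
     (\<forall>x. assoc_pm (tmap D0 id (D0 x)) = tmap id D0 (D0 x)) \<and>
     (\<forall>x y. D0 (mul x y) = tmul mul (D0 x) (D0 y)) \<and>
     (\<forall>a. assoc_pm (tmap (part_AH \<circ> D1) id (part_AH (D1 a))) = tmap id D0 (part_AH (D1 a))) \<and>
     (\<forall>a. assoc_pm (tmap (part_HA \<circ> D1) id (part_AH (D1 a))) = tmap id (part_AH \<circ> D1) (part_HA (D1 a))) \<and>
     (\<forall>a. assoc_pm (tmap D0 id (part_HA (D1 a))) = tmap id (part_HA \<circ> D1) (part_HA (D1 a))) \<and>
     (\<forall>x a. D1 (la x a) = tlact mul la (D0 x) (D1 a)) \<and>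
     (\<forall>a x. D1 (ra a x) = tract mul ra (D1 a) (D0 x)) \<and>
     (\<forall>a. D0 (f a) = tmap f id (part_AH (D1 a)) + tmap id f (part_HA (D1 a)))"

end

theory Submission
  imports Defs
begin

text \<open>All structure maps are linear extensions of maps on bases, and each axiom of a bialgebra
in LM is an identity between maps that are linear in every argument, so it suffices to check it
on basis vectors.  There the algebra axioms and the equivariance of the coaction reduce to the
axioms of the multiplicative graph, while the remaining axioms hold for arbitrary s and t: every vertex g is group-like, the coaction
a \<mapsto> a \<otimes> t(a) + s(a) \<otimes> a is coassociative, and it is compatible with \<phi> because
(t(a) - s(a)) \<otimes> t(a) + s(a) \<otimes> (t(a) - s(a)) = t(a) \<otimes> t(a) - s(a) \<otimes> s(a).\<close>

lemma lookup_smult_pm [simp]: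
  "Poly_Mapping.lookup (smult_pm c v) x = c * Poly_Mapping.lookup v x"
  unfolding smult_pm_def by transfer (simp add: when_def)

lemma smult_pm_zero_left [simp]: "smult_pm 0 v = 0"
  by (rule poly_mapping_eqI) simp

lemma smult_pm_zero_right [simp]: "smult_pm c 0 = 0"
  by (rule poly_mapping_eqI) simp

lemma smult_pm_one [simp]: "smult_pm 1 v = v"
  by (rule poly_mapping_eqI) simp

lemma smult_pm_smult [simp]: "smult_pm c (smult_pm d v) = smult_pm (c * d) v"
  by (rule poly_mapping_eqI) (simp add: mult.assoc)

lemma smult_pm_add_left: "smult_pm (c + d) v = smult_pm c v + smult_pm d v"
  by (rule poly_mapping_eqI) (simp add: lookup_add distrib_right)

lemma smult_pm_add_right: "smult_pm c (u + v) = smult_pm c u + smult_pm c v"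
  by (rule poly_mapping_eqI) (simp add: lookup_add distrib_left)

lemma smult_pm_sum: "smult_pm c (sum f S) = (\<Sum>x\<in>S. smult_pm c (f x))"
  by (induction S rule: infinite_finite_induct)
    (auto simp: smult_pm_add_right)

lemma lin_ext_superset:
  assumes "finite S" "Poly_Mapping.keys v \<subseteq> S"
  shows "lin_ext F v = (\<Sum>x\<in>S. smult_pm (Poly_Mapping.lookup v x) (F x))"
  unfolding lin_ext_def
  by (rule sum.mono_neutral_left) (use assms in \<open>auto simp: in_keys_iff\<close>)

lemma linear_lin_ext: "linear_pm (lin_ext F)"
  unfolding linear_pm_def
proof (intro conjI allI)
  fix u v :: "'a \<Rightarrow>\<^sub>0 'b"
  let ?S = "Poly_Mapping.keys u \<union> Poly_Mapping.keys v"
  have "Poly_Mapping.keys (u + v) \<subseteq> ?S" by (rule keys_add)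
  then show "lin_ext F (u + v) = lin_ext F u + lin_ext F v"
    by (simp add: lin_ext_superset[of ?S] lookup_add smult_pm_add_left sum.distrib)
next
  fix c :: 'b and v :: "'a \<Rightarrow>\<^sub>0 'b"
  have "Poly_Mapping.keys (smult_pm c v) \<subseteq> Poly_Mapping.keys v"
    by (auto simp: in_keys_iff)
  then show "lin_ext F (smult_pm c v) = smult_pm c (lin_ext F v)"
    by (simp add: lin_ext_superset[of "Poly_Mapping.keys v"] smult_pm_sum)
qed

lemma lin_ext_bvec [simp]: "lin_ext F (bvec x) = F x"
  unfolding lin_ext_def bvec_def by simp

lemma linear_pm_add: "linear_pm L \<Longrightarrow> L (u + v) = L u + L v"
  unfolding linear_pm_def by blast

lemma linear_pm_smult: "linear_pm L \<Longrightarrow> L (smult_pm c v) = smult_pm c (L v)"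
  unfolding linear_pm_def by blast

lemma linear_pm_zero: "linear_pm L \<Longrightarrow> L 0 = 0"
  using linear_pm_add[of L 0 0] by simp

lemma linear_pm_diff: "linear_pm L \<Longrightarrow> L (u - v) = L u - L v"
  using linear_pm_add[of L "u - v" v] by (simp add: eq_diff_eq)

lemma linear_pm_sum: "linear_pm L \<Longrightarrow> L (sum f S) = (\<Sum>x\<in>S. L (f x))"
  by (induction S rule: infinite_finite_induct) (auto simp: linear_pm_zero linear_pm_add)

lemma sum_bvec_expansion:
  "v = (\<Sum>x\<in>Poly_Mapping.keys v. smult_pm (Poly_Mapping.lookup v x) (bvec x))"
proof (rule poly_mapping_eqI)
  fix k
  have coeff: "(\<lambda>x. Poly_Mapping.lookup v x * Poly_Mapping.lookup (bvec x) k)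
      = (\<lambda>x. if x = k then Poly_Mapping.lookup v k else 0)"
    by (auto simp: bvec_def lookup_single when_def)
  show "Poly_Mapping.lookup v k
      = Poly_Mapping.lookup (\<Sum>x\<in>Poly_Mapping.keys v. smult_pm (Poly_Mapping.lookup v x) (bvec x)) k"
    unfolding lookup_sum lookup_smult_pm coeff by (simp add: in_keys_iff)
qed

lemma linear_pm_eq_lin_ext: "linear_pm L \<Longrightarrow> L v = lin_ext (\<lambda>x. L (bvec x)) v"
  by (subst sum_bvec_expansion[of v]) (simp add: linear_pm_sum linear_pm_smult lin_ext_def)

lemma linear_pm_eqI:
  assumes "linear_pm L" "linear_pm M" "\<And>x. L (bvec x) = M (bvec x)"
  shows "L v = M v"
proof -
  have "(\<lambda>x. L (bvec x)) = (\<lambda>x. M (bvec x))"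
    using assms(3) by (rule ext)
  then show ?thesis
    by (simp only: linear_pm_eq_lin_ext[OF assms(1), of v] linear_pm_eq_lin_ext[OF assms(2), of v])
qed

lemma bilinear_pm_eqI:
  assumes "\<And>y. linear_pm (\<lambda>x. P x y)" "\<And>y. linear_pm (\<lambda>x. Q x y)"
    and "\<And>x. linear_pm (\<lambda>y. P x y)" "\<And>x. linear_pm (\<lambda>y. Q x y)"
    and "\<And>a b. P (bvec a) (bvec b) = Q (bvec a) (bvec b)"
  shows "P x y = Q x y"
proof -
  have "P (bvec a) y = Q (bvec a) y" for a
    by (rule linear_pm_eqI[of "P (bvec a)" "Q (bvec a)"]) (use assms(3-5) in auto)
  then show ?thesis
    by (rule linear_pm_eqI[of "\<lambda>x. P x y" "\<lambda>x. Q x y", OF assms(1,2)])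
qed

lemma trilinear_pm_eqI:
  assumes "\<And>y z. linear_pm (\<lambda>x. P x y z)" "\<And>y z. linear_pm (\<lambda>x. Q x y z)"
    and "\<And>x z. linear_pm (\<lambda>y. P x y z)" "\<And>x z. linear_pm (\<lambda>y. Q x y z)"
    and "\<And>x y. linear_pm (\<lambda>z. P x y z)" "\<And>x y. linear_pm (\<lambda>z. Q x y z)"
    and "\<And>a b c. P (bvec a) (bvec b) (bvec c) = Q (bvec a) (bvec b) (bvec c)"
  shows "P x y z = Q x y z"
proof -
  have "P (bvec a) y z = Q (bvec a) y z" for a
    by (rule bilinear_pm_eqI[where P = "P (bvec a)" and Q = "Q (bvec a)"]) (use assms(3-7) in auto)
  then show ?thesis
    by (rule linear_pm_eqI[of "\<lambda>x. P x y z" "\<lambda>x. Q x y z", OF assms(1,2)])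
qed

lemma bil_ext_eq_lin_ext_left: "bil_ext B u v = lin_ext (\<lambda>x. lin_ext (\<lambda>y. B x y) v) u"
  unfolding bil_ext_def lin_ext_def by (simp add: smult_pm_sum)

lemma bil_ext_eq_lin_ext_right: "bil_ext B u v = lin_ext (\<lambda>y. lin_ext (\<lambda>x. B x y) u) v"
  unfolding bil_ext_def lin_ext_def by (subst sum.swap) (simp add: smult_pm_sum mult.commute)

lemma bil_ext_bvec [simp]: "bil_ext B (bvec x) (bvec y) = B x y"
  by (simp add: bil_ext_eq_lin_ext_left)

lemma linear_bil_ext_left: "linear_pm (\<lambda>u. bil_ext B u v)"
  unfolding bil_ext_eq_lin_ext_left by (rule linear_lin_ext)

lemma linear_bil_ext_right: "linear_pm (\<lambda>v. bil_ext B u v)"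
  unfolding bil_ext_eq_lin_ext_right by (rule linear_lin_ext)

lemma bilinear_bil_ext: "bilinear_pm (bil_ext B)"
  unfolding bilinear_pm_def using linear_bil_ext_left linear_bil_ext_right by blast

lemma lin_ext_add [simp]: "lin_ext F (u + v) = lin_ext F u + lin_ext F v"
  by (rule linear_pm_add[OF linear_lin_ext])

lemma lin_ext_diff [simp]: "lin_ext F (u - v) = lin_ext F u - lin_ext F v"
  by (rule linear_pm_diff[OF linear_lin_ext])

lemma bil_ext_add_left [simp]: "bil_ext B (u + v) w = bil_ext B u w + bil_ext B v w"
  by (rule linear_pm_add[OF linear_bil_ext_left])

lemma bil_ext_add_right [simp]: "bil_ext B w (u + v) = bil_ext B w u + bil_ext B w v"
  by (rule linear_pm_add[OF linear_bil_ext_right])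

lemma bil_ext_diff_left [simp]: "bil_ext B (u - v) w = bil_ext B u w - bil_ext B v w"
  by (rule linear_pm_diff[OF linear_bil_ext_left])

lemma bil_ext_diff_right [simp]: "bil_ext B w (u - v) = bil_ext B w u - bil_ext B w v"
  by (rule linear_pm_diff[OF linear_bil_ext_right])

lemma linear_pm_id: "linear_pm (\<lambda>x. x)"
  unfolding linear_pm_def by simp

lemma linear_pm_plus: "linear_pm f \<Longrightarrow> linear_pm g \<Longrightarrow> linear_pm (\<lambda>x. f x + g x)"
  unfolding linear_pm_def by (simp add: smult_pm_add_right ac_simps)

lemma linear_pm_compose: "linear_pm f \<Longrightarrow> linear_pm g \<Longrightarrow> linear_pm (\<lambda>x. f (g x))"
  unfolding linear_pm_def by simp

lemmas linear_pm_lin_ext_compose = linear_pm_compose[OF linear_lin_ext]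
lemmas linear_pm_bil_ext_left_compose = linear_pm_compose[OF linear_bil_ext_left]
lemmas linear_pm_bil_ext_right_compose = linear_pm_compose[OF linear_bil_ext_right]

lemmas linear_pm_intros =
  linear_pm_id linear_pm_plus linear_pm_lin_ext_compose
  linear_pm_bil_ext_left_compose linear_pm_bil_ext_right_compose

lemmas structure_map_defs =
  tens_def tmap_def assoc_pm_def part_AH_def part_HA_def inl_pm_def inr_pm_def
  tmul_def tlact_def tract_def

definition lin_lift :: "('x \<Rightarrow> 'y) \<Rightarrow> ('x \<Rightarrow>\<^sub>0 'k::field) \<Rightarrow> ('y \<Rightarrow>\<^sub>0 'k)"
  where "lin_lift f = lin_ext (\<lambda>x. bvec (f x))"

definition bil_lift :: "('x \<Rightarrow> 'y \<Rightarrow> 'z) \<Rightarrow> ('x \<Rightarrow>\<^sub>0 'k::field) \<Rightarrow> ('y \<Rightarrow>\<^sub>0 'k) \<Rightarrow> ('z \<Rightarrow>\<^sub>0 'k)"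
  where "bil_lift p = bil_ext (\<lambda>x y. bvec (p x y))"

definition graph_boundary :: "('a \<Rightarrow> 'g) \<Rightarrow> ('a \<Rightarrow> 'g) \<Rightarrow> ('a \<Rightarrow>\<^sub>0 'k::field) \<Rightarrow> ('g \<Rightarrow>\<^sub>0 'k)"
  where "graph_boundary s t = lin_ext (\<lambda>a. bvec (t a) - bvec (s a))"

definition graph_coaction ::
  "('a \<Rightarrow> 'g) \<Rightarrow> ('a \<Rightarrow> 'g) \<Rightarrow> ('a \<Rightarrow>\<^sub>0 'k::field) \<Rightarrow> (('a \<times> 'g) + ('g \<times> 'a) \<Rightarrow>\<^sub>0 'k)"
  where "graph_coaction s t = lin_ext (\<lambda>a. bvec (Inl (a, t a)) + bvec (Inr (s a, a)))"

abbreviation diag_coproduct :: "('g \<Rightarrow>\<^sub>0 'k::field) \<Rightarrow> ('g \<times> 'g \<Rightarrow>\<^sub>0 'k)"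
  where "diag_coproduct \<equiv> lin_lift (\<lambda>g. (g, g))"

lemmas lift_defs = lin_lift_def bil_lift_def graph_boundary_def graph_coaction_def

lemma bil_lift_assoc:
  assumes "\<And>x y z. p (q x y) z = r x (u y z)"
  shows "bil_lift p (bil_lift q X Y) Z = bil_lift r X (bil_lift u Y Z)"
  by (rule trilinear_pm_eqI[where P = "\<lambda>X Y Z. bil_lift p (bil_lift q X Y) Z"
                              and Q = "\<lambda>X Y Z. bil_lift r X (bil_lift u Y Z)"],
      simp_all only: bil_lift_def)
    (fast intro: linear_pm_intros | simp add: assms)+

lemma graph_boundary_left_equivariant:
  assumes "\<And>g a. s (la g a) = m g (s a)" "\<And>g a. t (la g a) = m g (t a)"
  shows "graph_boundary s t (bil_lift la x a) = bil_lift m x (graph_boundary s t a)"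
  by (rule bilinear_pm_eqI[where P = "\<lambda>x a. graph_boundary s t (bil_lift la x a)"
                             and Q = "\<lambda>x a. bil_lift m x (graph_boundary s t a)"],
      simp_all only: lift_defs)
    (fast intro: linear_pm_intros | simp add: assms)+

lemma graph_boundary_right_equivariant:
  assumes "\<And>a g. s (ra a g) = m (s a) g" "\<And>a g. t (ra a g) = m (t a) g"
  shows "graph_boundary s t (bil_lift ra a x) = bil_lift m (graph_boundary s t a) x"
  by (rule bilinear_pm_eqI[where P = "\<lambda>a x. graph_boundary s t (bil_lift ra a x)"
                             and Q = "\<lambda>a x. bil_lift m (graph_boundary s t a) x"],
      simp_all only: lift_defs)
    (fast intro: linear_pm_intros | simp add: assms)+

lemma lm_algebra_mult_graph:
  assumes "mult_graph s t m la ra"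
  shows "lm_algebra (graph_boundary s t) (bil_lift m) (bil_lift la) (bil_lift ra)"
  using assms unfolding lm_algebra_def mult_graph_def
  by (intro conjI allI bil_lift_assoc graph_boundary_left_equivariant
      graph_boundary_right_equivariant)
    (simp_all add: graph_boundary_def bil_lift_def linear_lin_ext bilinear_bil_ext)

lemma diag_coproduct_coassoc:
  "assoc_pm (tmap diag_coproduct id (diag_coproduct x)) = tmap id diag_coproduct (diag_coproduct x)"
  by (rule linear_pm_eqI[where L = "\<lambda>x. assoc_pm (tmap diag_coproduct id (diag_coproduct x))"
                           and M = "\<lambda>x. tmap id diag_coproduct (diag_coproduct x)"],
      simp_all only: lift_defs structure_map_defs)
    (fast intro: linear_pm_intros | simp)+

lemma diag_coproduct_multiplicative:
  "diag_coproduct (bil_lift m x y) = tmul (bil_lift m) (diag_coproduct x) (diag_coproduct y)"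
  by (rule bilinear_pm_eqI[where P = "\<lambda>x y. diag_coproduct (bil_lift m x y)"
                             and Q = "\<lambda>x y. tmul (bil_lift m) (diag_coproduct x) (diag_coproduct y)"],
      simp_all only: lift_defs structure_map_defs)
    (fast intro: linear_pm_intros | simp)+

lemma graph_coaction_coassoc_AHH:
  "assoc_pm (tmap (part_AH \<circ> graph_coaction s t) id (part_AH (graph_coaction s t a)))
     = tmap id diag_coproduct (part_AH (graph_coaction s t a))"
  by (rule linear_pm_eqI[where
        L = "\<lambda>a. assoc_pm (tmap (part_AH \<circ> graph_coaction s t) id (part_AH (graph_coaction s t a)))"
        and M = "\<lambda>a. tmap id diag_coproduct (part_AH (graph_coaction s t a))"],
      simp_all only: lift_defs structure_map_defs)
    (fast intro: linear_pm_intros | simp)+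

lemma graph_coaction_coassoc_HAH:
  "assoc_pm (tmap (part_HA \<circ> graph_coaction s t) id (part_AH (graph_coaction s t a)))
     = tmap id (part_AH \<circ> graph_coaction s t) (part_HA (graph_coaction s t a))"
  by (rule linear_pm_eqI[where
        L = "\<lambda>a. assoc_pm (tmap (part_HA \<circ> graph_coaction s t) id (part_AH (graph_coaction s t a)))"
        and M = "\<lambda>a. tmap id (part_AH \<circ> graph_coaction s t) (part_HA (graph_coaction s t a))"],
      simp_all only: lift_defs structure_map_defs)
    (fast intro: linear_pm_intros | simp)+

lemma graph_coaction_coassoc_HHA:
  "assoc_pm (tmap diag_coproduct id (part_HA (graph_coaction s t a)))
     = tmap id (part_HA \<circ> graph_coaction s t) (part_HA (graph_coaction s t a))"
  by (rule linear_pm_eqI[where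
        L = "\<lambda>a. assoc_pm (tmap diag_coproduct id (part_HA (graph_coaction s t a)))"
        and M = "\<lambda>a. tmap id (part_HA \<circ> graph_coaction s t) (part_HA (graph_coaction s t a))"],
      simp_all only: lift_defs structure_map_defs)
    (fast intro: linear_pm_intros | simp)+

lemma graph_coaction_left_equivariant:
  assumes "\<And>g a. s (la g a) = m g (s a)" "\<And>g a. t (la g a) = m g (t a)"
  shows "graph_coaction s t (bil_lift la x a)
           = tlact (bil_lift m) (bil_lift la) (diag_coproduct x) (graph_coaction s t a)"
  by (rule bilinear_pm_eqI[where P = "\<lambda>x a. graph_coaction s t (bil_lift la x a)"
        and Q = "\<lambda>x a. tlact (bil_lift m) (bil_lift la) (diag_coproduct x) (graph_coaction s t a)"],
      simp_all only: lift_defs structure_map_defs)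
    (fast intro: linear_pm_intros | simp add: assms)+

lemma graph_coaction_right_equivariant:
  assumes "\<And>a g. s (ra a g) = m (s a) g" "\<And>a g. t (ra a g) = m (t a) g"
  shows "graph_coaction s t (bil_lift ra a x)
           = tract (bil_lift m) (bil_lift ra) (graph_coaction s t a) (diag_coproduct x)"
  by (rule bilinear_pm_eqI[where P = "\<lambda>a x. graph_coaction s t (bil_lift ra a x)"
        and Q = "\<lambda>a x. tract (bil_lift m) (bil_lift ra) (graph_coaction s t a) (diag_coproduct x)"],
      simp_all only: lift_defs structure_map_defs)
    (fast intro: linear_pm_intros | simp add: assms)+

lemma diag_coproduct_graph_boundary:
  "diag_coproduct (graph_boundary s t a)
     = tmap (graph_boundary s t) id (part_AH (graph_coaction s t a))
       + tmap id (graph_boundary s t) (part_HA (graph_coaction s t a))"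
  by (rule linear_pm_eqI[where L = "\<lambda>a. diag_coproduct (graph_boundary s t a)"
        and M = "\<lambda>a. tmap (graph_boundary s t) id (part_AH (graph_coaction s t a))
                   + tmap id (graph_boundary s t) (part_HA (graph_coaction s t a))"],
      simp_all only: lift_defs structure_map_defs)
    (fast intro: linear_pm_intros | simp)+

lemma lm_bialgebra_mult_graph:
  assumes "mult_graph s t m la ra"
  shows "lm_bialgebra (graph_boundary s t) (bil_lift m) (bil_lift la) (bil_lift ra)
           diag_coproduct (graph_coaction s t)"
  using assms unfolding lm_bialgebra_def mult_graph_def
  by (intro conjI allI lm_algebra_mult_graph[OF assms] diag_coproduct_coassoc
      diag_coproduct_multiplicative graph_coaction_coassoc_AHH graph_coaction_coassoc_HAH
      graph_coaction_coassoc_HHA graph_coaction_left_equivariant graph_coaction_right_equivariant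
      diag_coproduct_graph_boundary)
    (simp_all add: lift_defs linear_lin_ext)

theorem mainTheorem7:
  fixes s t :: "'a \<Rightarrow> 'g" and m :: "'g \<Rightarrow> 'g \<Rightarrow> 'g"
    and la :: "'g \<Rightarrow> 'a \<Rightarrow> 'a" and ra :: "'a \<Rightarrow> 'g \<Rightarrow> 'a"
  assumes "mult_graph s t m la ra"
  shows "lm_bialgebra
     (lin_ext (\<lambda>a. bvec (t a) - bvec (s a)) :: ('a \<Rightarrow>\<^sub>0 'k::field_char_0) \<Rightarrow> ('g \<Rightarrow>\<^sub>0 'k))
     (bil_ext (\<lambda>g h. bvec (m g h)))
     (bil_ext (\<lambda>g a. bvec (la g a)))
     (bil_ext (\<lambda>a g. bvec (ra a g)))
     (lin_ext (\<lambda>g. bvec (g, g)))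
     (lin_ext (\<lambda>a. bvec (Inl (a, t a)) + bvec (Inr (s a, a))))"
  using lm_bialgebra_mult_graph[OF assms] unfolding lift_defs .

end
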